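(* For $0\le i\le n$, $dp(h,i)$ is strictly increasing (in lexicographic order) for $0\le h\le i$.
   Context: Let $x_0\le x_1\le\cdots\le x_{n+1}$ be real numbers, $\{x\}=x-\lfloor x\rfloor$, and let $\pi=(\pi_0,\dots,\pi_{n+1})$ be the permutation of $\{0,\dots,n+1\}$ such that for $0\le i<j\le n+1$, $\pi_i>\pi_j$ iff $(\{x_i\},-x_i,i)<(\{x_j\},-x_j,j)$ lexicographically. For a sequence of indices $s_0<\cdots<s_k$, a drop is a consecutive pair $(s_{h-1},s_h)$ with $\pi_{s_{h-1}}>\pi_{s_h}$. For $0\le h\le i\le n$, $dp(h,i)$ is the pair $(d(h,i),p(h,i))$, where $d(h,i)$ is the minimum number of drops over all sequences of $h+1$ indices $0=s_0<s_1<\cdots<s_h\le i$, and $p(h,i)$ is the minimum of $\pi_{s_h}$ over all such sequences having exactly $d(h,i)$ drops. Pairs are compared lexicographically. *)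

theory Defs
  imports Complex_Main
begin

definition key_less :: "(nat \<Rightarrow> real) \<Rightarrow> nat \<Rightarrow> nat \<Rightarrow> bool" where
  "key_less x i j \<longleftrightarrow>
     frac (x i) < frac (x j) \<or>
     (frac (x i) = frac (x j) \<and> (- x i < - x j \<or> (- x i = - x j \<and> i < j)))"

definition is_pi :: "nat \<Rightarrow> (nat \<Rightarrow> real) \<Rightarrow> (nat \<Rightarrow> nat) \<Rightarrow> bool" where
  "is_pi n x \<pi> \<longleftrightarrow> bij_betw \<pi> {0..n+1} {0..n+1} \<and>
     (\<forall>i j. i < j \<and> j \<le> n + 1 \<longrightarrow> (\<pi> i > \<pi> j \<longleftrightarrow> key_less x i j))"

definition valid_seq :: "nat \<Rightarrow> nat \<Rightarrow> (nat \<Rightarrow> nat) \<Rightarrow> bool" where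
  "valid_seq h i s \<longleftrightarrow> s 0 = 0 \<and> (\<forall>k<h. s k < s (Suc k)) \<and> s h \<le> i"

definition drops :: "(nat \<Rightarrow> nat) \<Rightarrow> nat \<Rightarrow> (nat \<Rightarrow> nat) \<Rightarrow> nat" where
  "drops \<pi> h s = card {k \<in> {1..h}. \<pi> (s (k - 1)) > \<pi> (s k)}"

definition d :: "(nat \<Rightarrow> nat) \<Rightarrow> nat \<Rightarrow> nat \<Rightarrow> nat" where
  "d \<pi> h i = Min {drops \<pi> h s | s. valid_seq h i s}"

definition p :: "(nat \<Rightarrow> nat) \<Rightarrow> nat \<Rightarrow> nat \<Rightarrow> nat" where
  "p \<pi> h i = Min {\<pi> (s h) | s. valid_seq h i s \<and> drops \<pi> h s = d \<pi> h i}"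

definition dp :: "(nat \<Rightarrow> nat) \<Rightarrow> nat \<Rightarrow> nat \<Rightarrow> nat \<times> nat" where
  "dp \<pi> h i = (d \<pi> h i, p \<pi> h i)"

definition lex_less :: "nat \<times> nat \<Rightarrow> nat \<times> nat \<Rightarrow> bool" where
  "lex_less a b \<longleftrightarrow> fst a < fst b \<or> (fst a = fst b \<and> snd a < snd b)"

end

theory Submission
  imports Defs "HOL-Library.Product_Lexorder"
begin

text \<open>Take a sequence attaining \<open>dp(h+1, i)\<close> and drop its last index. This gives a
  competitor for \<open>dp(h, i)\<close> with at most as many drops. If the number of drops does not go
  down, the removed last step was no drop, hence (\<open>\<pi>\<close> being injective) an ascent, and the
  new endpoint has a strictly smaller \<open>\<pi>\<close>-value.\<close>

lemma lex_less_iff_less: "lex_less a b \<longleftrightarrow> a < b"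
  by (simp add: lex_less_def less_prod_def')

lemma drops_Suc:
  "drops \<pi> (Suc h) s = drops \<pi> h s + (if \<pi> (s h) > \<pi> (s (Suc h)) then 1 else 0)"
proof -
  have "{k \<in> {1..Suc h}. \<pi> (s (k - 1)) > \<pi> (s k)} =
        {k \<in> {1..h}. \<pi> (s (k - 1)) > \<pi> (s k)} \<union>
        (if \<pi> (s h) > \<pi> (s (Suc h)) then {Suc h} else {})"
    by (auto simp: le_Suc_eq)
  then show ?thesis
    unfolding drops_def by (simp add: card_Un_disjoint)
qed

lemma drops_le: "drops \<pi> h s \<le> h"
proof -
  have "drops \<pi> h s \<le> card {1..h}"
    unfolding drops_def by (rule card_mono) auto
  then show ?thesis by simp
qed

lemma valid_seq_id: "h \<le> i \<Longrightarrow> valid_seq h i (\<lambda>k. k)"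
  by (simp add: valid_seq_def)

lemma valid_seq_Suc_D: "valid_seq (Suc h) i s \<Longrightarrow> valid_seq h i s"
  by (auto simp: valid_seq_def intro: order.trans[OF less_imp_le])

lemma valid_seq_last_less: "valid_seq (Suc h) i s \<Longrightarrow> s h < s (Suc h) \<and> s (Suc h) \<le> i"
  by (simp add: valid_seq_def)

lemma finite_drops_values: "finite {drops \<pi> h s | s. valid_seq h i s}"
  by (rule finite_subset[of _ "{0..h}"]) (auto simp: drops_le)

lemma d_le_drops: "valid_seq h i s \<Longrightarrow> d \<pi> h i \<le> drops \<pi> h s"
  unfolding d_def by (rule Min_le[OF finite_drops_values]) blast

lemma d_attained:
  assumes "h \<le> i"
  obtains s where "valid_seq h i s" "drops \<pi> h s = d \<pi> h i"
proof -
  have "d \<pi> h i \<in> {drops \<pi> h s | s. valid_seq h i s}"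
    unfolding d_def using finite_drops_values valid_seq_id[OF assms] by (intro Min_in) auto
  then show ?thesis using that by auto
qed

lemma finite_endpoint_values:
  "finite {\<pi> (s h) | s. valid_seq h i s \<and> drops \<pi> h s = d \<pi> h i}"
  by (rule finite_subset[of _ "\<pi> ` {0..i}"]) (auto simp: valid_seq_def)

lemma p_le_endpoint:
  "valid_seq h i s \<Longrightarrow> drops \<pi> h s = d \<pi> h i \<Longrightarrow> p \<pi> h i \<le> \<pi> (s h)"
  unfolding p_def by (rule Min_le[OF finite_endpoint_values]) blast

lemma p_attained:
  assumes "h \<le> i"
  obtains s where "valid_seq h i s" "drops \<pi> h s = d \<pi> h i" "\<pi> (s h) = p \<pi> h i"
proof -
  obtain s where "valid_seq h i s" "drops \<pi> h s = d \<pi> h i"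
    using d_attained[OF assms] .
  then have "p \<pi> h i \<in> {\<pi> (s h) | s. valid_seq h i s \<and> drops \<pi> h s = d \<pi> h i}"
    unfolding p_def using finite_endpoint_values by (intro Min_in) auto
  then show ?thesis using that by auto
qed

lemma dp_less_dp_Suc:
  assumes inj: "inj_on \<pi> {0..i}" and hi: "Suc h \<le> i"
  shows "dp \<pi> h i < dp \<pi> (Suc h) i"
proof -
  obtain s where valid: "valid_seq (Suc h) i s" and opt: "drops \<pi> (Suc h) s = d \<pi> (Suc h) i"
    and endpoint: "\<pi> (s (Suc h)) = p \<pi> (Suc h) i"
    using p_attained[OF hi] .
  have valid_h: "valid_seq h i s"
    using valid_seq_Suc_D[OF valid] .
  have d_le: "d \<pi> h i \<le> drops \<pi> h s"
    using d_le_drops[OF valid_h] .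
  show ?thesis
  proof (cases "\<pi> (s h) > \<pi> (s (Suc h))")
    case True
    then have "d \<pi> h i < d \<pi> (Suc h) i"
      using d_le opt drops_Suc[of \<pi> h s] by simp
    then show ?thesis by (simp add: dp_def)
  next
    case no_drop: False
    have "\<pi> (s h) \<noteq> \<pi> (s (Suc h))"
      using valid_seq_last_less[OF valid] inj by (auto dest: inj_onD)
    with no_drop have ascent: "\<pi> (s h) < \<pi> (s (Suc h))" by simp
    have same_drops: "drops \<pi> (Suc h) s = drops \<pi> h s"
      using no_drop drops_Suc[of \<pi> h s] by simp
    show ?thesis
    proof (cases "d \<pi> h i = d \<pi> (Suc h) i")
      case True
      then have "p \<pi> h i \<le> \<pi> (s h)"
        using p_le_endpoint[OF valid_h] d_le opt same_drops by simp
      with True ascent endpoint show ?thesis by (simp add: dp_def)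
    next
      case False
      then show ?thesis using d_le opt same_drops by (simp add: dp_def)
    qed
  qed
qed

theorem lemma6:
  fixes n :: nat and x :: "nat \<Rightarrow> real" and \<pi> :: "nat \<Rightarrow> nat"
  assumes sorted: "\<And>i j. i \<le> j \<Longrightarrow> j \<le> n + 1 \<Longrightarrow> x i \<le> x j"
    and pi: "is_pi n x \<pi>"
  shows "\<forall>i \<le> n. \<forall>h1 h2. h1 < h2 \<and> h2 \<le> i \<longrightarrow> lex_less (dp \<pi> h1 i) (dp \<pi> h2 i)"
proof (intro allI impI, elim conjE)
  fix i h1 h2 assume "i \<le> n" and "h1 < h2" and "h2 \<le> i"
  have inj: "inj_on \<pi> {0..i}"
    using pi \<open>i \<le> n\<close> by (auto simp: is_pi_def bij_betw_def intro: inj_on_subset)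
  from \<open>h1 < h2\<close> have "Suc h1 \<le> h2" by simp
  then have "dp \<pi> h1 i < dp \<pi> h2 i"
  proof (induction h2 rule: dec_induct)
    case base
    show ?case using dp_less_dp_Suc[OF inj] \<open>h1 < h2\<close> \<open>h2 \<le> i\<close> by simp
  next
    case (step h)
    then show ?case using dp_less_dp_Suc[OF inj, of h] \<open>h2 \<le> i\<close> by simp
  qed
  then show "lex_less (dp \<pi> h1 i) (dp \<pi> h2 i)"
    by (simp add: lex_less_iff_less)
qed

end
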